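(* Let $K\subseteq\mathbb{R}^N$ be a closed convex set such that $B(0,r_K)\subset K\subset B(0,R_K)$ for some $r_K,R_K>0$, let $\Phi:\mathbb{R}\to\mathbb{R}$ be an increasing function, and set $\Psi(x):=\Phi(d_K^2(x))$ for $x\in\mathbb{R}^N$. Then: (a) If $\Phi$ is of class $C^1$, then for every $x\in\mathbb{R}^N$, $$\nabla\Psi(x)=2\Phi'(d_K^2(x))(x-\Pi_K(x)),$$ $$\nabla\Psi(x)\cdot x\ge 2\Phi'(d_K^2(x))\,d_K^2(x)\qquad\text{and}\qquad \nabla\Psi(x)\cdot x\ge 2\Phi'(d_K^2(x))\,r_K\,d_K(x).$$ (b) If $\partial K$ is of class $C^2$ and $\Phi$ is of class $C^2$, then for every $x\in\mathbb{R}^N\setminus K$ and $v\in\mathbb{R}^N$, $$D^2\Psi(x)v\cdot v=4\Phi''(d_K^2(x))[(x-\Pi_K(x))\cdot v]^2+2\Phi'(d_K^2(x))(v-D\Pi_K(x)v)\cdot v.$$ If in addition the second fundamental form of $\partial K$ is positive definite at every point of $\partial K$, then there exists $C_K>0$ such that for every $x\in\mathbb{R}^N\setminus K$ and $v\in\mathbb{R}^N$, $$D^2\Psi(x)v\cdot v\ge 4\Phi''(d_K^2(x))[(x-\Pi_K(x))\cdot v]^2+2\Phi'(d_K^2(x))\frac{C_Kd_K(x)}{1+C_Kd_K(x)}|v|^2.$$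
   Context: $d_K$ denotes the Euclidean distance function to $K$ and $\Pi_K:\mathbb{R}^N\to K$ the Euclidean projection onto $K$; $B(0,r)$ is the open ball of radius $r$ centered at $0$. *)

theory Defs
  imports "HOL-Analysis.Analysis"
begin

definition grad :: "('a::euclidean_space \<Rightarrow> real) \<Rightarrow> 'a \<Rightarrow> 'a" where
  "grad f x = (SOME g. (f has_derivative (\<lambda>h. g \<bullet> h)) (at x))"

definition C2_real :: "(real \<Rightarrow> real) \<Rightarrow> bool" where
  "C2_real f \<longleftrightarrow> (\<forall>t. f differentiable (at t)) \<and> (deriv f) C1_differentiable_on UNIV"

text \<open>A local C^2 defining function g of K near p, on the open set U: K \<inter> U = {g \<le> 0},
  G is the gradient of g and H y is the derivative of G at y (the Hessian), continuous in y,
  and the gradient never vanishes on U.\<close>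
definition local_C2_defining ::
  "'a::euclidean_space set \<Rightarrow> 'a \<Rightarrow> 'a set \<Rightarrow> ('a \<Rightarrow> real) \<Rightarrow> ('a \<Rightarrow> 'a) \<Rightarrow> ('a \<Rightarrow> 'a \<Rightarrow> 'a) \<Rightarrow> bool"
  where
  "local_C2_defining K p U g G H \<longleftrightarrow>
     open U \<and> p \<in> U \<and>
     (\<forall>y\<in>U. (g has_derivative (\<lambda>h. G y \<bullet> h)) (at y)) \<and>
     (\<forall>y\<in>U. (G has_derivative H y) (at y)) \<and>
     (\<forall>v. continuous_on U (\<lambda>y. H y v)) \<and>
     (\<forall>y\<in>U. G y \<noteq> 0) \<and>
     K \<inter> U = {y\<in>U. g y \<le> 0}"

definition C2_boundary :: "'a::euclidean_space set \<Rightarrow> bool" where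
  "C2_boundary K \<longleftrightarrow> (\<forall>p\<in>frontier K. \<exists>U g G H. local_C2_defining K p U g G H)"

text \<open>The second fundamental form of the boundary is positive definite at every boundary point:
  the Hessian of a local defining function is positive definite on the tangent space
  (the orthogonal complement of the gradient).\<close>
definition pos_def_second_fundamental_form :: "'a::euclidean_space set \<Rightarrow> bool" where
  "pos_def_second_fundamental_form K \<longleftrightarrow>
     (\<forall>p\<in>frontier K. \<exists>U g G H. local_C2_defining K p U g G H \<and>
        (\<forall>v. v \<noteq> 0 \<and> G p \<bullet> v = 0 \<longrightarrow> H p v \<bullet> v > 0))"

end

theory Submission
  imports Defs
begin

text \<open>Since the metric projection onto a closed convex set is 1-Lipschitz and minimizes the
  distance, the first-order remainder of the squared distance at x is squeezed between two
  quadratic terms, so its gradient is 2 (x - closest_point K x). The inequalities of part (a)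
  are the variational inequality of the projection tested against 0 and against the point of
  the inner ball in the direction of the outer normal.

  For x outside K the projection p lies on the boundary, and x = p + s G p where g is a local
  defining function with gradient G and Hessian H. Hence (p, s) \<mapsto> (p + s G p, g p) maps
  the normal coordinates of every y near x to (y, 0). Convexity makes H p nonnegative on the
  tangent space, so the derivative of this map is invertible, and the inverse function
  theorem shows that the projection is differentiable, its derivative w at v being tangent
  with v = w + s H p w + \<mu> G p. The Hessian formula follows by the chain rule. If the second
  fundamental form is at least c, uniformly on the compact boundary, this relation gives
  v \<bullet> w \<ge> (1 + c d) |w|^2 with d the distance of x to K, and hence
  (v - w) \<bullet> v \<ge> c d / (1 + c d) |v|^2.\<close>

section \<open>Squared distance to a closed convex set\<close>

lemma infdist_closest_point:
  fixes K :: "'a::euclidean_space set"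
  assumes "closed K" "K \<noteq> {}"
  shows "infdist x K = norm (x - closest_point K x)"
  using assms by (simp add: infdist_eq_setdist setdist_closest_point dist_norm)

lemma has_derivative_at_quadratic_remainder:
  fixes f :: "'a::real_normed_vector \<Rightarrow> 'b::real_normed_vector"
  assumes "bounded_linear L"
    and remainder: "\<And>y. norm (f y - f x - L (y - x)) \<le> C * (norm (y - x))\<^sup>2"
  shows "(f has_derivative L) (at x)"
  unfolding has_derivative_at_alt
proof (intro conjI allI impI assms(1))
  fix e :: real assume e: "e > 0"
  show "\<exists>d>0. \<forall>y. norm (y - x) < d \<longrightarrow> norm (f y - f x - L (y - x)) \<le> e * norm (y - x)"
  proof (intro exI[of _ "e / (\<bar>C\<bar> + 1)"] conjI allI impI)
    show "e / (\<bar>C\<bar> + 1) > 0" using e by simp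
    fix y assume "norm (y - x) < e / (\<bar>C\<bar> + 1)"
    then have "(\<bar>C\<bar> + 1) * norm (y - x) \<le> e" by (simp add: field_simps)
    then have "C * norm (y - x) \<le> e" by (smt (verit) mult_right_mono norm_ge_zero abs_ge_self)
    from mult_right_mono[OF this norm_ge_zero[of "y - x"]]
    have "C * (norm (y - x))\<^sup>2 \<le> e * norm (y - x)" by (simp add: power2_eq_square mult.assoc)
    then show "norm (f y - f x - L (y - x)) \<le> e * norm (y - x)"
      using remainder[of y] by simp
  qed
qed

text \<open>The remainder is controlled by testing the minimality of both projections against each
  other and by the 1-Lipschitz property of the projection.\<close>
lemma has_derivative_infdist_squared:
  fixes K :: "'a::euclidean_space set"
  assumes "closed K" "convex K" "K \<noteq> {}"
  shows "((\<lambda>y. (infdist y K)\<^sup>2) has_derivative (\<lambda>h. 2 * ((x - closest_point K x) \<bullet> h))) (at x)"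
proof (rule has_derivative_at_quadratic_remainder[where C = 1])
  fix y
  define p q h where "p = closest_point K x" and "q = closest_point K y" and "h = y - x"
  have dx: "(infdist x K)\<^sup>2 = (norm (x - p))\<^sup>2" and dy: "(infdist y K)\<^sup>2 = (norm (y - q))\<^sup>2"
    using infdist_closest_point[OF assms(1,3)] p_def q_def by auto
  have "p \<in> K" "q \<in> K" using closest_point_in_set[OF assms(1,3)] p_def q_def by auto
  then have upper: "(infdist y K)\<^sup>2 \<le> (norm (y - p))\<^sup>2"
    and lower: "(infdist x K)\<^sup>2 \<le> (norm (x - q))\<^sup>2"
    by (metis dist_norm infdist_le infdist_nonneg power_mono)+
  have "norm (q - p) \<le> norm h"
    using closest_point_lipschitz[OF assms(2,1,3), of y x] by (simp add: p_def q_def h_def dist_norm)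
  then have lip: "\<bar>(q - p) \<bullet> h\<bar> \<le> (norm h)\<^sup>2"
    using Cauchy_Schwarz_ineq2[of "q - p" h]
    by (metis mult_right_mono norm_ge_zero order.trans power2_eq_square)
  have "(norm (y - p))\<^sup>2 = (norm (x - p))\<^sup>2 + 2 * ((x - p) \<bullet> h) + (norm h)\<^sup>2"
    and "(norm (x - q))\<^sup>2 = (norm (y - q))\<^sup>2 - 2 * ((y - q) \<bullet> h) + (norm h)\<^sup>2"
    and "(y - q) \<bullet> h = (x - p) \<bullet> h + (norm h)\<^sup>2 - (q - p) \<bullet> h"
    unfolding h_def power2_norm_eq_inner by (simp_all add: algebra_simps inner_commute)
  with upper lower lip dx dy
  show "norm ((infdist y K)\<^sup>2 - (infdist x K)\<^sup>2 - 2 * ((x - closest_point K x) \<bullet> (y - x)))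
      \<le> 1 * (norm (y - x))\<^sup>2"
    unfolding p_def[symmetric] h_def[symmetric] by (auto simp: abs_le_iff)
qed (intro bounded_linear_intros)

lemma grad_eqI:
  fixes f :: "'a::euclidean_space \<Rightarrow> real"
  assumes "(f has_derivative (\<lambda>h. g \<bullet> h)) (at x)"
  shows "grad f x = g"
  unfolding grad_def
proof (rule some_equality)
  fix g' assume "(f has_derivative (\<lambda>h. g' \<bullet> h)) (at x)"
  then have "(\<lambda>h. g' \<bullet> h) = (\<lambda>h. g \<bullet> h)" using has_derivative_unique assms by blast
  then have "(g' - g) \<bullet> (g' - g) = 0" by (metis inner_diff_left right_minus_eq)
  then show "g' = g" by simp
qed fact

lemma has_derivative_comp_infdist_squared:
  fixes K :: "'a::euclidean_space set"
  assumes "closed K" "convex K" "K \<noteq> {}"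
    and "(Phi has_real_derivative Phi') (at ((infdist x K)\<^sup>2))"
  shows "((\<lambda>y. Phi ((infdist y K)\<^sup>2)) has_derivative
      (\<lambda>h. (2 * Phi') *\<^sub>R (x - closest_point K x) \<bullet> h)) (at x)"
  using has_derivative_compose[OF has_derivative_infdist_squared[OF assms(1-3)]
      has_field_derivative_imp_has_derivative[OF assms(4)]]
  by (simp add: o_def algebra_simps)

lemma grad_comp_infdist_squared:
  fixes K :: "'a::euclidean_space set"
  assumes "closed K" "convex K" "K \<noteq> {}"
    and "(Phi has_real_derivative Phi') (at ((infdist x K)\<^sup>2))"
  shows "grad (\<lambda>y. Phi ((infdist y K)\<^sup>2)) x = (2 * Phi') *\<^sub>R (x - closest_point K x)"
  by (rule grad_eqI, rule has_derivative_comp_infdist_squared[OF assms])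

text \<open>Test the variational inequality of the projection with the point of the ball in direction
  of the outer normal.\<close>
lemma closest_point_inner_ge_radius:
  fixes K :: "'a::euclidean_space set"
  assumes "closed K" "convex K" "r \<ge> 0" "cball 0 r \<subseteq> K"
  shows "r * norm (x - closest_point K x) \<le> (x - closest_point K x) \<bullet> closest_point K x"
proof (cases "x = closest_point K x")
  case False
  define p where "p = closest_point K x"
  define u where "u = (r / norm (x - p)) *\<^sub>R (x - p)"
  have "u \<in> K" using assms(3,4) by (auto simp: u_def)
  then have "(x - p) \<bullet> (u - p) \<le> 0"
    using closest_point_dot[OF assms(2,1)] p_def by blast
  moreover have "(x - p) \<bullet> u = r * norm (x - p)"
    using False by (simp add: u_def p_def power2_norm_eq_inner[symmetric] power2_eq_square)
  ultimately show ?thesis by (simp add: inner_diff_right p_def)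
qed simp

lemma closest_point_inner_self_ge:
  fixes K :: "'a::euclidean_space set"
  assumes "closed K" "convex K" "r \<ge> 0" "cball 0 r \<subseteq> K"
  shows "(x - closest_point K x) \<bullet> x \<ge> (infdist x K)\<^sup>2"
    and "(x - closest_point K x) \<bullet> x \<ge> r * infdist x K"
proof -
  have "K \<noteq> {}" using assms(3,4) by auto
  then have d: "infdist x K = norm (x - closest_point K x)"
    using infdist_closest_point[OF assms(1)] by blast
  have "(x - closest_point K x) \<bullet> x
      = (norm (x - closest_point K x))\<^sup>2 + (x - closest_point K x) \<bullet> closest_point K x"
    by (simp add: power2_norm_eq_inner algebra_simps)
  moreover have "0 \<le> (x - closest_point K x) \<bullet> closest_point K x"
    using closest_point_inner_ge_radius[OF assms, of x] assms(3) by (meson mult_nonneg_nonneg norm_ge_zero order_trans)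
  ultimately show "(x - closest_point K x) \<bullet> x \<ge> (infdist x K)\<^sup>2"
    and "(x - closest_point K x) \<bullet> x \<ge> r * infdist x K"
    using closest_point_inner_ge_radius[OF assms, of x] d by (simp_all add: add_increasing)
qed

lemma mono_imp_has_real_derivative_nonneg:
  fixes Phi :: "real \<Rightarrow> real"
  assumes "mono Phi" "(Phi has_real_derivative D) (at t)"
  shows "D \<ge> 0"
  using assms by (intro mono_on_imp_deriv_nonneg[of UNIV]) auto

lemma grad_comp_infdist_squared_inner_ge:
  fixes K :: "'a::euclidean_space set"
  assumes K: "closed K" "convex K" and r: "r \<ge> 0" "cball 0 r \<subseteq> K"
    and "mono Phi" and Phi: "(Phi has_real_derivative Phi') (at ((infdist x K)\<^sup>2))"
  shows "grad (\<lambda>y. Phi ((infdist y K)\<^sup>2)) x \<bullet> x \<ge> 2 * Phi' * (infdist x K)\<^sup>2"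
    and "grad (\<lambda>y. Phi ((infdist y K)\<^sup>2)) x \<bullet> x \<ge> 2 * Phi' * r * infdist x K"
proof -
  have "K \<noteq> {}" using r by auto
  then have "grad (\<lambda>y. Phi ((infdist y K)\<^sup>2)) x \<bullet> x = 2 * Phi' * ((x - closest_point K x) \<bullet> x)"
    using grad_comp_infdist_squared[OF K _ Phi] by simp
  moreover have "2 * Phi' \<ge> 0" using mono_imp_has_real_derivative_nonneg[OF assms(5) Phi] by simp
  ultimately show "grad (\<lambda>y. Phi ((infdist y K)\<^sup>2)) x \<bullet> x \<ge> 2 * Phi' * (infdist x K)\<^sup>2"
    and "grad (\<lambda>y. Phi ((infdist y K)\<^sup>2)) x \<bullet> x \<ge> 2 * Phi' * r * infdist x K"
    using closest_point_inner_self_ge[OF K r, of x] by (simp_all add: mult_left_mono mult.assoc)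
qed

section \<open>Local defining functions of the boundary of a convex set\<close>

lemma DERIV_neg_imp_eventually_less_right:
  fixes f :: "real \<Rightarrow> real"
  assumes "(f has_real_derivative l) (at x)" "l < 0"
  shows "\<forall>\<^sub>F t in at_right x. f t < f x"
proof -
  obtain d where "d > 0" "\<And>h. h > 0 \<Longrightarrow> h < d \<Longrightarrow> f (x + h) < f x"
    using DERIV_neg_dec_right[OF assms] by blast
  then show ?thesis
    unfolding eventually_at_right_field
    by (intro exI[of _ "x + d"]) (metis add.commute diff_add_cancel diff_less_eq less_add_same_cancel1 diff_gt_0_iff_gt)
qed

lemma DERIV_pos_imp_eventually_greater_right:
  fixes f :: "real \<Rightarrow> real"
  assumes "(f has_real_derivative l) (at x)" "l > 0"
  shows "\<forall>\<^sub>F t in at_right x. f t > f x"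
  using DERIV_neg_imp_eventually_less_right[of "\<lambda>t. - f t" "- l" x] assms
  by (auto intro: derivative_intros)

lemma DERIV_second_neg_imp_eventually_le_right:
  fixes f :: "real \<Rightarrow> real"
  assumes f': "\<forall>\<^sub>F t in nhds x. (f has_real_derivative f' t) (at t)"
    and "f' x = 0" and "(f' has_real_derivative l) (at x)" and "l < 0"
  shows "\<forall>\<^sub>F t in at_right x. f t \<le> f x"
proof -
  obtain b where b: "b > x" "\<And>t. x < t \<Longrightarrow> t < b \<Longrightarrow> f' t < 0"
    using DERIV_neg_imp_eventually_less_right[OF assms(3,4)] assms(2)
    unfolding eventually_at_right_field by auto
  obtain e where e: "e > 0" "\<And>t. dist t x < e \<Longrightarrow> (f has_real_derivative f' t) (at t)"
    using f' by (auto simp: eventually_nhds_metric)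
  show ?thesis
    unfolding eventually_at_right_field
  proof (intro exI[of _ "min b (x + e)"] conjI allI impI)
    show "min b (x + e) > x" using b e by simp
    fix y assume y: "x < y" "y < min b (x + e)"
    show "f y \<le> f x"
    proof (rule DERIV_nonpos_imp_decreasing_open[of x y f])
      show "\<exists>l. (f has_real_derivative l) (at t) \<and> l \<le> 0" if "x < t" "t < y" for t
        using b(2)[of t] e(2)[of t] that y by (auto simp: dist_real_def intro: less_imp_le)
      have "isCont f t" if "t \<in> {x..y}" for t
        using e(2)[of t] that y by (auto simp: dist_real_def intro: DERIV_isCont)
      then show "continuous_on {x..y} f" by (simp add: continuous_at_imp_continuous_on)
    qed (use y in simp)
  qed
qed

lemma isCont_eventually_in_open:
  assumes "isCont f x" "open U" "f x \<in> U"
  shows "\<forall>\<^sub>F y in nhds x. f y \<in> U"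
  using assms(1) unfolding isCont_def tendsto_at_iff_tendsto_nhds
  using topological_tendstoD assms(2,3) by blast

lemma has_field_derivative_along_line:
  assumes "(g has_derivative (\<lambda>h. G \<bullet> h)) (at (q + t *\<^sub>R h))"
  shows "((\<lambda>t. g (q + t *\<^sub>R h)) has_real_derivative (G \<bullet> h)) (at t)"
proof -
  have "((\<lambda>t. q + t *\<^sub>R h) has_derivative (\<lambda>s. s *\<^sub>R h)) (at t)"
    by (auto intro!: derivative_eq_intros)
  from has_derivative_compose[OF this assms] show ?thesis
    unfolding has_field_derivative_def by (rule has_derivative_eq_rhs) (auto simp: fun_eq_iff o_def)
qed

lemma eventually_at_right_line_in_open:
  fixes h :: "'a::real_normed_vector"
  assumes "open U" "q \<in> U"
  shows "\<forall>\<^sub>F t in at_right 0. q + t *\<^sub>R h \<in> U"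
proof -
  have "((\<lambda>t. q + t *\<^sub>R h) \<longlongrightarrow> q) (at_right 0)"
    by (auto intro!: tendsto_eq_intros)
  then show ?thesis using assms topological_tendstoD by blast
qed

lemma polar_of_open_halfspace:
  fixes w N :: "'a::real_inner"
  assumes "N \<noteq> 0" and polar: "\<And>h. N \<bullet> h < 0 \<Longrightarrow> w \<bullet> h \<le> 0"
  shows "w = (norm w / norm N) *\<^sub>R N"
proof -
  have NN: "N \<bullet> N > 0" using assms(1) by simp
  define a where "a = (w \<bullet> N) / (N \<bullet> N)"
  define k where "k = w - a *\<^sub>R N"
  have Nk: "N \<bullet> k = 0" using NN by (simp add: k_def a_def inner_diff_right inner_commute)
  have k0: "k = 0"
  proof (rule ccontr)
    assume "k \<noteq> 0"
    then have kk: "k \<bullet> k > 0" by simp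
    define s where "s = (w \<bullet> N + 1) / (k \<bullet> k)"
    have "N \<bullet> (s *\<^sub>R k - N) < 0" using Nk NN by (simp add: inner_diff_right)
    then have "w \<bullet> (s *\<^sub>R k - N) \<le> 0" by (rule polar)
    moreover have "w \<bullet> k = k \<bullet> k" using Nk by (simp add: k_def inner_diff_left inner_commute)
    then have "w \<bullet> (s *\<^sub>R k - N) = 1"
      using kk by (simp add: s_def inner_diff_right inner_commute)
    ultimately show False by simp
  qed
  have "w \<bullet> (- N) \<le> 0" using polar[of "-N"] NN by simp
  then have "a \<ge> 0" using NN by (simp add: a_def)
  moreover have w: "w = a *\<^sub>R N" using k0 by (simp add: k_def)
  ultimately have "a = norm w / norm N" using assms(1) by (simp add: field_simps)
  then show ?thesis using w by simp
qed

lemma local_C2_definingD: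
  assumes "local_C2_defining K p U g G H"
  shows "open U" "p \<in> U" "\<And>y. y \<in> U \<Longrightarrow> (g has_derivative (\<lambda>h. G y \<bullet> h)) (at y)"
    "\<And>y. y \<in> U \<Longrightarrow> (G has_derivative H y) (at y)"
    "\<And>v. continuous_on U (\<lambda>y. H y v)" "\<And>y. y \<in> U \<Longrightarrow> G y \<noteq> 0"
    "\<And>y. y \<in> U \<Longrightarrow> y \<in> K \<longleftrightarrow> g y \<le> 0"
  using assms unfolding local_C2_defining_def by (auto simp: set_eq_iff)

lemma local_C2_defining_shift:
  assumes "local_C2_defining K p U g G H" "q \<in> U"
  shows "local_C2_defining K q U g G H"
  using assms unfolding local_C2_defining_def by auto

lemma local_C2_defining_continuous:
  assumes "local_C2_defining K p U g G H"
  shows "continuous_on U g" "continuous_on U G"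
  using local_C2_definingD[OF assms] has_derivative_continuous
  by (blast intro: continuous_at_imp_continuous_on)+

lemma local_C2_defining_bounded_linear_hessian:
  assumes "local_C2_defining K p U g G H" "y \<in> U"
  shows "bounded_linear (H y)"
  using local_C2_definingD(4)[OF assms] has_derivative_bounded_linear by blast

lemma closest_point_in_frontier:
  fixes K :: "'a::euclidean_space set"
  assumes "closed K" "K \<noteq> {}" "x \<notin> K"
  shows "closest_point K x \<in> frontier K"
proof -
  have "closest_point K x \<notin> interior K"
  proof
    assume int: "closest_point K x \<in> interior K"
    then have "rel_interior K = interior K" "affine hull K = UNIV"
      using rel_interior_nonempty_interior affine_hull_nonempty_interior by blast+
    then show False
      using closest_point_in_rel_interior[OF assms(1,2)] int assms(3) interior_subset by blast
  qed
  then show ?thesis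
    using closest_point_in_set[OF assms(1,2)] assms(1) by (simp add: frontier_def)
qed

lemma local_C2_defining_frontier_zero:
  fixes K :: "'a::euclidean_space set"
  assumes ch: "local_C2_defining K p U g G H" and "closed K" and q: "q \<in> frontier K" "q \<in> U"
  shows "g q = 0"
proof -
  note c = local_C2_definingD[OF ch]
  have "q \<in> K" using q(1) assms(2) frontier_subset_closed by blast
  then have "g q \<le> 0" using c(7) q(2) by blast
  moreover have "\<not> g q < 0"
  proof
    assume "g q < 0"
    moreover have "open (U \<inter> g -` {..<0})"
      by (rule continuous_open_preimage[OF local_C2_defining_continuous(1)[OF ch] c(1)]) simp
    moreover have "U \<inter> g -` {..<0} \<subseteq> K" using c(7) by auto
    ultimately have "q \<in> interior K" using q(2) by (meson IntI interiorI lessThan_iff vimageI)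
    then show False using q(1) by (simp add: frontier_def)
  qed
  ultimately show "g q = 0" by simp
qed

lemma local_C2_defining_eventually_inside:
  fixes K :: "'a::euclidean_space set"
  assumes ch: "local_C2_defining K p U g G H" and q: "q \<in> U" "g q \<le> 0" and "G q \<bullet> h < 0"
  shows "\<forall>\<^sub>F t in at_right 0. q + t *\<^sub>R h \<in> K"
proof -
  note c = local_C2_definingD[OF ch]
  have "((\<lambda>t. g (q + t *\<^sub>R h)) has_real_derivative G q \<bullet> h) (at 0)"
    using has_field_derivative_along_line[of g "G q" q 0 h] c(3)[OF q(1)] by simp
  from DERIV_neg_imp_eventually_less_right[OF this assms(4)]
  have "\<forall>\<^sub>F t in at_right 0. g (q + t *\<^sub>R h) < g q" by simp
  moreover have "\<forall>\<^sub>F t in at_right 0. q + t *\<^sub>R h \<in> U"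
    using eventually_at_right_line_in_open[OF c(1) q(1)] .
  ultimately show ?thesis
    by eventually_elim (use c(7) q(2) in force)
qed

lemma local_C2_defining_supporting_halfspace:
  fixes K :: "'a::euclidean_space set"
  assumes ch: "local_C2_defining K p U g G H" and "convex K"
    and q: "q \<in> K" "q \<in> U" "g q = 0" and "y \<in> K"
  shows "G q \<bullet> (y - q) \<le> 0"
proof (rule ccontr)
  note c = local_C2_definingD[OF ch]
  assume "\<not> ?thesis"
  then have pos: "G q \<bullet> (y - q) > 0" by simp
  have "((\<lambda>t. g (q + t *\<^sub>R (y - q))) has_real_derivative G q \<bullet> (y - q)) (at 0)"
    using has_field_derivative_along_line[of g "G q" q 0 "y - q"] c(3)[OF q(2)] by simp
  from DERIV_pos_imp_eventually_greater_right[OF this pos]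
  have "\<forall>\<^sub>F t in at_right 0. g (q + t *\<^sub>R (y - q)) > 0" using q(3) by simp
  moreover have "\<forall>\<^sub>F t in at_right 0. q + t *\<^sub>R (y - q) \<in> U"
    using eventually_at_right_line_in_open[OF c(1) q(2)] .
  moreover have "\<forall>\<^sub>F t in at_right 0. 0 < t \<and> t < (1::real)"
    unfolding eventually_at_right_field by (auto intro: exI[of _ 1])
  ultimately have "\<forall>\<^sub>F t in at_right (0::real). False"
  proof eventually_elim
    case (elim t)
    have "q + t *\<^sub>R (y - q) = (1 - t) *\<^sub>R q + t *\<^sub>R y" by (simp add: algebra_simps)
    then have "q + t *\<^sub>R (y - q) \<in> K" using convexD_alt[OF assms(2) q(1) assms(6), of t] elim by simp
    then show False using elim c(7) by force
  qed
  then show False by simp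
qed

lemma closest_point_eq_scaled_normal:
  fixes K :: "'a::euclidean_space set"
  assumes ch: "local_C2_defining K p U g G H" and "closed K" "convex K" "K \<noteq> {}"
    and "closest_point K y \<in> U" "g (closest_point K y) = 0"
  shows "y - closest_point K y
     = (norm (y - closest_point K y) / norm (G (closest_point K y))) *\<^sub>R G (closest_point K y)"
proof (rule polar_of_open_halfspace)
  define q where "q = closest_point K y"
  show "G q \<noteq> 0" using local_C2_definingD(6)[OF ch] assms(5) q_def by simp
  fix h assume "G q \<bullet> h < 0"
  then have "\<forall>\<^sub>F t in at_right 0. q + t *\<^sub>R h \<in> K \<and> t > 0"
    using local_C2_defining_eventually_inside[OF ch] assms(5,6) eventually_at_right_less
    by (simp add: q_def eventually_conj_iff)
  then obtain t where t: "q + t *\<^sub>R h \<in> K" "t > 0"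
    using eventually_happens trivial_limit_at_right_real by blast
  from closest_point_dot[OF assms(3,2) t(1), of y]
  have "t * ((y - q) \<bullet> h) \<le> 0" by (simp add: q_def)
  then show "(y - q) \<bullet> h \<le> 0" using t(2) by (simp add: mult_le_0_iff)
qed

lemma local_C2_defining_parabola_eventually_inside:
  fixes K :: "'a::euclidean_space set"
  assumes ch: "local_C2_defining K p U g G H"
    and q: "q \<in> U" "g q = 0" and h: "G q \<bullet> h = 0"
    and curved: "2 * a * (G q \<bullet> G q) + H q h \<bullet> h < 0"
  shows "\<forall>\<^sub>F t in at_right 0. q + t *\<^sub>R h + (a * t\<^sup>2) *\<^sub>R G q \<in> K"
proof -
  note c = local_C2_definingD[OF ch]
  define \<gamma> where "\<gamma> t = q + t *\<^sub>R h + (a * t\<^sup>2) *\<^sub>R G q" for t :: real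
  define \<gamma>' where "\<gamma>' t = h + (2 * a * t) *\<^sub>R G q" for t :: real
  have d\<gamma>: "(\<gamma> has_derivative (\<lambda>s. s *\<^sub>R \<gamma>' t)) (at t)" for t
    unfolding \<gamma>_def \<gamma>'_def
    by (rule derivative_eq_intros refl | simp)+ (simp add: algebra_simps)
  have \<gamma>0: "\<gamma> 0 = q" "\<gamma>' 0 = h" by (simp_all add: \<gamma>_def \<gamma>'_def)
  have near: "\<forall>\<^sub>F t in nhds 0. \<gamma> t \<in> U"
    using isCont_eventually_in_open[OF has_derivative_continuous[OF d\<gamma>] c(1)] q(1) \<gamma>0 by simp
  have "\<forall>\<^sub>F t in nhds 0. ((\<lambda>t. g (\<gamma> t)) has_real_derivative G (\<gamma> t) \<bullet> \<gamma>' t) (at t)"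
    using near
  proof eventually_elim
    case (elim t)
    from has_derivative_compose[OF d\<gamma>[of t] c(3)[OF elim]]
    show ?case unfolding has_field_derivative_def
      by (rule has_derivative_eq_rhs) (auto simp: fun_eq_iff o_def)
  qed
  moreover have "G (\<gamma> 0) \<bullet> \<gamma>' 0 = 0" using h \<gamma>0 by simp
  moreover have "((\<lambda>t. G (\<gamma> t) \<bullet> \<gamma>' t) has_real_derivative 2 * a * (G q \<bullet> G q) + H q h \<bullet> h) (at 0)"
  proof -
    have lin: "linear (H q)"
      using local_C2_defining_bounded_linear_hessian[OF ch q(1)] bounded_linear.linear by blast
    have "(G has_derivative H q) (at (\<gamma> 0))" using c(4)[OF q(1)] \<gamma>0 by simp
    from has_derivative_compose[OF d\<gamma>[of 0] this]
    have "((\<lambda>t. G (\<gamma> t)) has_derivative (\<lambda>s. s *\<^sub>R H q h)) (at 0)"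
      using \<gamma>0 by (simp add: o_def linear_scale[OF lin])
    moreover have "(\<gamma>' has_derivative (\<lambda>s. s *\<^sub>R ((2 * a) *\<^sub>R G q))) (at 0)"
      unfolding \<gamma>'_def by (rule derivative_eq_intros refl | simp)+ (simp add: fun_eq_iff)
    ultimately show ?thesis
      unfolding has_field_derivative_def
      by (rule has_derivative_eq_rhs[OF has_derivative_inner]) (auto simp: fun_eq_iff \<gamma>0 algebra_simps)
  qed
  ultimately have "\<forall>\<^sub>F t in at_right 0. g (\<gamma> t) \<le> g (\<gamma> 0)"
    using curved by (rule DERIV_second_neg_imp_eventually_le_right)
  moreover have "\<forall>\<^sub>F t in at_right 0. \<gamma> t \<in> U"
    using near by (simp add: eventually_at_filter eventually_mono)
  ultimately show ?thesis
    by eventually_elim (use c(7) q(2) \<gamma>0 in \<open>auto simp: \<gamma>_def\<close>)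
qed

text \<open>Convexity forces K to lie in the supporting half-space at q, which a parabola bending
  outwards would leave.\<close>
lemma local_C2_defining_tangential_hessian_nonneg:
  fixes K :: "'a::euclidean_space set"
  assumes ch: "local_C2_defining K p U g G H" and "convex K"
    and q: "q \<in> K" "q \<in> U" "g q = 0" and h: "G q \<bullet> h = 0"
  shows "H q h \<bullet> h \<ge> 0"
proof (rule ccontr)
  assume "\<not> ?thesis"
  then have neg: "H q h \<bullet> h < 0" by simp
  define N where "N = G q"
  have NN: "N \<bullet> N > 0" using local_C2_definingD(6)[OF ch q(2)] by (simp add: N_def)
  define a where "a = - (H q h \<bullet> h) / (4 * (N \<bullet> N))"
  have a: "a > 0" using neg NN unfolding a_def by (intro divide_pos_pos) auto
  have "2 * a * (N \<bullet> N) + H q h \<bullet> h < 0"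
    using NN neg by (simp add: a_def field_simps)
  from local_C2_defining_parabola_eventually_inside[OF ch q(2,3) h, of a] this
  have "\<forall>\<^sub>F t in at_right 0. t > 0 \<and> q + t *\<^sub>R h + (a * t\<^sup>2) *\<^sub>R N \<in> K"
    using eventually_at_right_less by (auto simp: N_def eventually_conj_iff)
  then obtain t where t: "t > 0" "q + t *\<^sub>R h + (a * t\<^sup>2) *\<^sub>R N \<in> K"
    using eventually_happens trivial_limit_at_right_real by blast
  have "N \<bullet> (q + t *\<^sub>R h + (a * t\<^sup>2) *\<^sub>R N - q) \<le> 0"
    using local_C2_defining_supporting_halfspace[OF ch assms(2) q t(2)] by (simp add: N_def)
  moreover have "N \<bullet> (q + t *\<^sub>R h + (a * t\<^sup>2) *\<^sub>R N - q) = a * t\<^sup>2 * (N \<bullet> N)"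
    using h by (simp add: N_def inner_add_right)
  moreover have "a * t\<^sup>2 * (N \<bullet> N) > 0" using a t(1) NN by simp
  ultimately show False by linarith
qed

section \<open>Differentiability of the metric projection\<close>

text \<open>For y outside K near the boundary, y = closest_point K y + s G (closest_point K y) with
  g (closest_point K y) = 0, so normal_map g G maps (closest_point K y, s) to (y, 0): the
  projection is read off from a local inverse of this map.\<close>
definition normal_map :: "('a::real_vector \<Rightarrow> real) \<Rightarrow> ('a \<Rightarrow> 'a) \<Rightarrow> 'a \<times> real \<Rightarrow> 'a \<times> real"
  where "normal_map g G z = (fst z + snd z *\<^sub>R G (fst z), g (fst z))"

definition normal_map_deriv ::
  "('a::real_inner \<Rightarrow> 'a) \<Rightarrow> ('a \<Rightarrow> 'a \<Rightarrow> 'a) \<Rightarrow> 'a \<times> real \<Rightarrow> 'a \<times> real \<Rightarrow> 'a \<times> real"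
  where "normal_map_deriv G H z w =
    (fst w + snd z *\<^sub>R H (fst z) (fst w) + snd w *\<^sub>R G (fst z), G (fst z) \<bullet> fst w)"

lemma has_derivative_normal_map:
  assumes ch: "local_C2_defining K p U g G H" and "fst z \<in> U"
  shows "(normal_map g G has_derivative normal_map_deriv G H z) (at z)"
proof -
  note c = local_C2_definingD[OF ch]
  have G: "((\<lambda>z. G (fst z)) has_derivative (\<lambda>w. H (fst z) (fst w))) (at z)"
    using has_derivative_compose[OF has_derivative_fst[OF has_derivative_ident] c(4)[OF assms(2)]]
    by simp
  have g: "((\<lambda>z. g (fst z)) has_derivative (\<lambda>w. G (fst z) \<bullet> fst w)) (at z)"
    using has_derivative_compose[OF has_derivative_fst[OF has_derivative_ident] c(3)[OF assms(2)]]
    by simp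
  show ?thesis
    unfolding normal_map_def[abs_def] normal_map_deriv_def
    by (rule derivative_eq_intros G g refl | simp)+ (simp add: fun_eq_iff algebra_simps)
qed

lemma blinfun_apply_Blinfun_normal_map_deriv:
  assumes "local_C2_defining K p U g G H" and "fst z \<in> U"
  shows "blinfun_apply (Blinfun (normal_map_deriv G H z)) = normal_map_deriv G H z"
  using has_derivative_bounded_linear[OF has_derivative_normal_map[OF assms]]
  by (rule bounded_linear_Blinfun_apply)

lemma continuous_on_normal_map_deriv:
  assumes ch: "local_C2_defining K p U g G H"
  shows "continuous_on (U \<times> UNIV) (\<lambda>z. Blinfun (normal_map_deriv G H z))"
proof (rule continuous_on_blinfun_componentwise)
  fix w :: "'a \<times> real"
  have fst: "fst ` (U \<times> UNIV) \<subseteq> U" by auto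
  have "continuous_on (U \<times> UNIV) (\<lambda>z. H (fst z) (fst w))"
    by (rule continuous_on_compose2[OF local_C2_definingD(5)[OF ch] continuous_on_fst[OF continuous_on_id] fst])
  moreover have "continuous_on (U \<times> UNIV) (\<lambda>z. G (fst z))"
    by (rule continuous_on_compose2[OF local_C2_defining_continuous(2)[OF ch] continuous_on_fst[OF continuous_on_id] fst])
  ultimately have "continuous_on (U \<times> UNIV) (\<lambda>z. normal_map_deriv G H z w)"
    unfolding normal_map_deriv_def by (intro continuous_intros)
  then show "continuous_on (U \<times> UNIV) (\<lambda>z. blinfun_apply (Blinfun (normal_map_deriv G H z)) w)"
    by (rule continuous_on_eq) (auto simp: blinfun_apply_Blinfun_normal_map_deriv[OF ch])
qed

lemma inj_normal_map_deriv:
  fixes K :: "'a::euclidean_space set"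
  assumes ch: "local_C2_defining K p U g G H" and "convex K"
    and q: "q \<in> K" "q \<in> U" "g q = 0" and "s \<ge> 0"
  shows "inj (normal_map_deriv G H (q, s))"
proof -
  have lin: "linear (H q)"
    using local_C2_defining_bounded_linear_hessian[OF ch q(2)] bounded_linear.linear by blast
  have "linear (normal_map_deriv G H (q, s))"
    using has_derivative_normal_map[OF ch, of "(q, s)"] q(2)
    by (simp add: has_derivative_linear)
  moreover have "w = 0" if w: "normal_map_deriv G H (q, s) w = 0" for w
  proof -
    obtain h \<mu> where hw: "w = (h, \<mu>)" by (cases w)
    have eq: "h + s *\<^sub>R H q h + \<mu> *\<^sub>R G q = 0" and tangent: "G q \<bullet> h = 0"
      using w by (simp_all add: normal_map_deriv_def hw zero_prod_def)
    have "0 = (h + s *\<^sub>R H q h + \<mu> *\<^sub>R G q) \<bullet> h" using eq by simp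
    also have "\<dots> = h \<bullet> h + s * (H q h \<bullet> h)" using tangent by (simp add: inner_add_left)
    finally have "h \<bullet> h \<le> 0"
      using local_C2_defining_tangential_hessian_nonneg[OF ch assms(2) q tangent] assms(6)
      by (smt (verit) mult_nonneg_nonneg)
    then have "h = 0" by (meson inner_eq_zero_iff inner_ge_zero order_antisym)
    with eq have "\<mu> *\<^sub>R G q = 0" using linear_0[OF lin] by simp
    then have "\<mu> = 0" using local_C2_definingD(6)[OF ch q(2)] by simp
    with \<open>h = 0\<close> show "w = 0" by (simp add: hw zero_prod_def)
  qed
  ultimately show ?thesis by (simp add: linear_injective_0)
qed

lemma eventually_normal_map_closest_point:
  fixes K :: "'a::euclidean_space set"
  assumes ch: "local_C2_defining K (closest_point K x) U g G H"
    and K: "closed K" "convex K" "K \<noteq> {}" and "x \<notin> K"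
  shows "\<forall>\<^sub>F y in nhds x.
    normal_map g G (closest_point K y, infdist y K / norm (G (closest_point K y))) = (y, 0)"
proof -
  note c = local_C2_definingD[OF ch]
  have "\<forall>\<^sub>F y in nhds x. closest_point K y \<in> U"
    using isCont_eventually_in_open[OF continuous_at_closest_point[OF K(2,1,3)] c(1,2)] .
  moreover have "\<forall>\<^sub>F y in nhds x. y \<notin> K"
    using eventually_nhds_in_open[of "- K" x] K(1) assms(5) by (simp add: open_Compl)
  ultimately show ?thesis
  proof eventually_elim
    case (elim y)
    have "closest_point K y \<in> frontier K" using closest_point_in_frontier[OF K(1,3) elim(2)] .
    then have "g (closest_point K y) = 0"
      using local_C2_defining_frontier_zero[OF ch K(1)] elim(1) by blast
    moreover note closest_point_eq_scaled_normal[OF ch K elim(1) this]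
    ultimately show ?case
      by (simp add: normal_map_def infdist_closest_point[OF K(1,3)] algebra_simps)
  qed
qed

lemma isCont_closest_point_normal_coordinates:
  fixes K :: "'a::euclidean_space set"
  assumes ch: "local_C2_defining K (closest_point K x) U g G H"
    and K: "closed K" "convex K" "K \<noteq> {}"
  shows "isCont (\<lambda>y. (closest_point K y, infdist y K / norm (G (closest_point K y)))) x"
proof -
  note c = local_C2_definingD[OF ch]
  have cP: "isCont (closest_point K) x" using continuous_at_closest_point[OF K(2,1,3)] .
  moreover have "isCont G (closest_point K x)" using has_derivative_continuous[OF c(4)[OF c(2)]] .
  ultimately have "isCont (\<lambda>y. G (closest_point K y)) x"
    using continuous_at_compose by (auto simp: o_def)
  then show ?thesis using c(6)[OF c(2)] by (intro continuous_intros cP) auto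
qed

lemma linear_left_inverse_blinfun:
  fixes L :: "'a::euclidean_space \<Rightarrow> 'a"
  assumes "linear L" "inj L"
  obtains M where "M o\<^sub>L Blinfun L = id_blinfun"
proof -
  obtain M where M: "linear M" "M \<circ> L = id" using linear_injective_left_inverse[OF assms] by blast
  have "bounded_linear M" "bounded_linear L"
    using M(1) assms(1) linear_conv_bounded_linear by blast+
  then have "Blinfun M o\<^sub>L Blinfun L = id_blinfun"
    by (intro blinfun_eqI) (simp add: bounded_linear_Blinfun_apply pointfree_idE[OF M(2)])
  then show ?thesis by (rule that)
qed

text \<open>The inverse function theorem applies because convexity makes the derivative of the
  normal map injective at boundary points.\<close>
lemma normal_map_local_inverse:
  fixes K :: "'a::euclidean_space set"
  assumes ch: "local_C2_defining K p U g G H" and "convex K"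
    and q: "q \<in> K" "q \<in> U" "g q = 0" and "s \<ge> 0"
  obtains U' V ginv g' where "open U'" "(q, s) \<in> U'" "open V"
    and "homeomorphism U' V (normal_map g G) ginv"
    and "(ginv has_derivative g') (at (normal_map g G (q, s)))"
    and "\<And>w. normal_map_deriv G H (q, s) (g' w) = w"
proof -
  define F' where "F' z = Blinfun (normal_map_deriv G H z)" for z
  have qs: "(q, s) \<in> U \<times> UNIV" using q(2) by simp
  have F'qs: "blinfun_apply (F' (q, s)) = normal_map_deriv G H (q, s)"
    unfolding F'_def using blinfun_apply_Blinfun_normal_map_deriv[OF ch] q(2) by simp
  have derF: "(normal_map g G has_derivative blinfun_apply (F' z)) (at z)" if "z \<in> U \<times> UNIV" for z
    using has_derivative_normal_map[OF ch] blinfun_apply_Blinfun_normal_map_deriv[OF ch] that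
    by (auto simp: F'_def)
  have "linear (normal_map_deriv G H (q, s))"
    using derF[OF qs] F'qs has_derivative_linear by fastforce
  with inj_normal_map_deriv[OF assms] obtain M where "M o\<^sub>L F' (q, s) = id_blinfun"
    using linear_left_inverse_blinfun unfolding F'_def by metis
  then obtain U' V ginv g' where U': "open U'" "(q, s) \<in> U'" and "open V"
    and hom: "homeomorphism U' V (normal_map g G) ginv"
    and dginv: "\<And>y. y \<in> V \<Longrightarrow> (ginv has_derivative g' y) (at y)"
    and g'eq: "\<And>y. y \<in> V \<Longrightarrow> g' y = inv (blinfun_apply (F' (ginv y)))"
    and bij: "\<And>y. y \<in> V \<Longrightarrow> bij (blinfun_apply (F' (ginv y)))"
    using inverse_function_theorem[OF open_Times[OF local_C2_definingD(1)[OF ch] open_UNIV] derF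
        continuous_on_normal_map_deriv[OF ch, folded F'_def] qs]
    by metis
  have V: "normal_map g G (q, s) \<in> V" using hom U'(2) by (auto simp: homeomorphism_def)
  moreover have "ginv (normal_map g G (q, s)) = (q, s)" using homeomorphism_apply1[OF hom U'(2)] .
  ultimately have "normal_map_deriv G H (q, s) (g' (normal_map g G (q, s)) w) = w" for w
    using bij[OF V] g'eq[OF V] F'qs by (simp add: bij_is_surj surj_f_inv_f)
  with U' \<open>open V\<close> hom dginv[OF V] show thesis by (rule that)
qed

lemma closest_point_has_derivative_local:
  fixes K :: "'a::euclidean_space set"
  assumes K: "closed K" "convex K" "K \<noteq> {}" and x: "x \<notin> K"
    and ch: "local_C2_defining K (closest_point K x) U g G H"
  obtains P' where "(closest_point K has_derivative P') (at x)"
    and "\<And>v. \<exists>\<mu>. normal_map_deriv G H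
      (closest_point K x, infdist x K / norm (G (closest_point K x))) (P' v, \<mu>) = (v, 0)"
proof -
  note c = local_C2_definingD[OF ch]
  define \<zeta> where "\<zeta> y = (closest_point K y, infdist y K / norm (G (closest_point K y)))" for y
  have F\<zeta>: "\<forall>\<^sub>F y in nhds x. normal_map g G (\<zeta> y) = (y, 0)"
    using eventually_normal_map_closest_point[OF ch K x] by (simp add: \<zeta>_def)
  then have F\<zeta>x: "normal_map g G (\<zeta> x) = (x, 0)" by (rule eventually_nhds_x_imp_x)
  have "closest_point K x \<in> frontier K" using closest_point_in_frontier[OF K(1,3) x] .
  then have "g (closest_point K x) = 0" using local_C2_defining_frontier_zero[OF ch K(1)] c(2) by blast
  then obtain U' V ginv g' where U': "open U'" "\<zeta> x \<in> U'"
    and hom: "homeomorphism U' V (normal_map g G) ginv"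
    and dginv: "(ginv has_derivative g') (at (x, 0))"
    and inv: "\<And>w. normal_map_deriv G H (\<zeta> x) (g' w) = w"
    using normal_map_local_inverse[OF ch K(2) closest_point_in_set[OF K(1,3)] c(2)] F\<zeta>x
    unfolding \<zeta>_def by (metis divide_nonneg_nonneg infdist_nonneg norm_ge_zero)
  have "\<forall>\<^sub>F y in nhds x. \<zeta> y \<in> U'"
    using isCont_eventually_in_open[OF isCont_closest_point_normal_coordinates[OF ch K, folded \<zeta>_def] U'] .
  then have near: "\<forall>\<^sub>F y in nhds x. ginv (y, 0) = \<zeta> y"
    using F\<zeta> by eventually_elim (metis homeomorphism_apply1[OF hom])
  define P' where "P' v = fst (g' (v, 0))" for v
  have "((\<lambda>y. (y, 0::real)) has_derivative (\<lambda>v. (v, 0))) (at x)"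
    by (auto intro!: derivative_eq_intros)
  from has_derivative_fst[OF has_derivative_compose[OF this dginv]]
  have "((\<lambda>y. fst (ginv (y, 0))) has_derivative P') (at x)"
    by (simp add: P'_def[abs_def])
  then have "(closest_point K has_derivative P') (at x)"
    by (rule has_derivative_transform_eventually)
      (use near eventually_nhds_x_imp_x[OF near] in \<open>auto simp: \<zeta>_def eventually_at_filter elim: eventually_mono\<close>)
  moreover have "\<exists>\<mu>. normal_map_deriv G H (\<zeta> x) (P' v, \<mu>) = (v, 0)" for v
    using inv[of "(v, 0)"] unfolding P'_def by (metis prod.collapse)
  ultimately show thesis using that unfolding \<zeta>_def by blast
qed

lemma closest_point_differentiable_C2_boundary:
  fixes K :: "'a::euclidean_space set"
  assumes "closed K" "convex K" "K \<noteq> {}" "C2_boundary K" "x \<notin> K"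
  shows "closest_point K differentiable (at x)"
proof -
  obtain U g G H where "local_C2_defining K (closest_point K x) U g G H"
    using assms(4) closest_point_in_frontier[OF assms(1,3,5)] unfolding C2_boundary_def by blast
  from closest_point_has_derivative_local[OF assms(1-3,5) this] show ?thesis
    using differentiableI by metis
qed

section \<open>Second derivative of a function of the squared distance\<close>

lemma C2_realD:
  assumes "C2_real Phi"
  shows "(Phi has_real_derivative deriv Phi t) (at t)"
    and "(deriv Phi has_real_derivative deriv (deriv Phi) t) (at t)"
  using assms unfolding C2_real_def C1_differentiable_on_eq
  by (auto simp: DERIV_deriv_iff_real_differentiable)

lemma has_derivative_grad_comp_infdist_squared:
  fixes K :: "'a::euclidean_space set"
  assumes K: "closed K" "convex K" "K \<noteq> {}"
    and Phi: "\<And>t. (Phi has_real_derivative deriv Phi t) (at t)"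
    and Phi': "(deriv Phi has_real_derivative Phi'') (at ((infdist x K)\<^sup>2))"
    and P: "(closest_point K has_derivative P') (at x)"
  shows "(grad (\<lambda>y. Phi ((infdist y K)\<^sup>2)) has_derivative
      (\<lambda>h. (2 * deriv Phi ((infdist x K)\<^sup>2)) *\<^sub>R (h - P' h)
        + (4 * Phi'' * ((x - closest_point K x) \<bullet> h)) *\<^sub>R (x - closest_point K x))) (at x)"
proof -
  have grad: "grad (\<lambda>y. Phi ((infdist y K)\<^sup>2))
      = (\<lambda>y. (2 * deriv Phi ((infdist y K)\<^sup>2)) *\<^sub>R (y - closest_point K y))"
    using grad_comp_infdist_squared[OF K Phi] by blast
  have "((\<lambda>y. 2 * deriv Phi ((infdist y K)\<^sup>2)) has_derivative
      (\<lambda>h. 4 * Phi'' * ((x - closest_point K x) \<bullet> h))) (at x)"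
    using has_derivative_mult_right[OF has_derivative_compose[OF has_derivative_infdist_squared[OF K, of x]
        has_field_derivative_imp_has_derivative[OF Phi']], of 2]
    by (rule has_derivative_eq_rhs) (simp add: fun_eq_iff)
  from has_derivative_scaleR[OF this has_derivative_diff[OF has_derivative_ident P]]
  show ?thesis unfolding grad .
qed

lemma hessian_comp_infdist_squared:
  fixes K :: "'a::euclidean_space set"
  assumes K: "closed K" "convex K" "K \<noteq> {}"
    and Phi: "\<And>t. (Phi has_real_derivative deriv Phi t) (at t)"
    and Phi': "(deriv Phi has_real_derivative Phi'') (at ((infdist x K)\<^sup>2))"
    and P: "closest_point K differentiable (at x)"
  shows "grad (\<lambda>y. Phi ((infdist y K)\<^sup>2)) differentiable (at x)"
    and "frechet_derivative (grad (\<lambda>y. Phi ((infdist y K)\<^sup>2))) (at x) v \<bullet> v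
      = 4 * Phi'' * ((x - closest_point K x) \<bullet> v)\<^sup>2
        + 2 * deriv Phi ((infdist x K)\<^sup>2) * ((v - frechet_derivative (closest_point K) (at x) v) \<bullet> v)"
proof -
  note D = has_derivative_grad_comp_infdist_squared[OF K Phi Phi' P[unfolded frechet_derivative_works]]
  show "grad (\<lambda>y. Phi ((infdist y K)\<^sup>2)) differentiable (at x)"
    using D differentiableI by blast
  show "frechet_derivative (grad (\<lambda>y. Phi ((infdist y K)\<^sup>2))) (at x) v \<bullet> v
      = 4 * Phi'' * ((x - closest_point K x) \<bullet> v)\<^sup>2
        + 2 * deriv Phi ((infdist x K)\<^sup>2) * ((v - frechet_derivative (closest_point K) (at x) v) \<bullet> v)"
    unfolding frechet_derivative_at[OF D, symmetric]
    by (simp add: inner_add_left power2_eq_square algebra_simps inner_commute)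
qed

section \<open>Lower bounds on the curvature of the boundary\<close>

text \<open>H q restricted to the tangent space and divided by norm (G q) is the second fundamental
  form of the boundary at q.\<close>
definition second_fundamental_form_ge :: "'a::euclidean_space set \<Rightarrow> real \<Rightarrow> 'a \<Rightarrow> bool" where
  "second_fundamental_form_ge K c q \<longleftrightarrow> (\<exists>U g G H. local_C2_defining K q U g G H \<and>
     (\<forall>w. G q \<bullet> w = 0 \<longrightarrow> c * norm (G q) * (norm w)\<^sup>2 \<le> H q w \<bullet> w))"

lemma second_fundamental_form_ge_mono:
  assumes "second_fundamental_form_ge K c' q" "c \<le> c'"
  shows "second_fundamental_form_ge K c q"
proof -
  obtain U g G H where ch: "local_C2_defining K q U g G H"
    and H: "\<And>w. G q \<bullet> w = 0 \<Longrightarrow> c' * norm (G q) * (norm w)\<^sup>2 \<le> H q w \<bullet> w"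
    using assms(1) unfolding second_fundamental_form_ge_def by blast
  have "c * norm (G q) * (norm w)\<^sup>2 \<le> H q w \<bullet> w" if "G q \<bullet> w = 0" for w
    using H[OF that] mult_right_mono[OF assms(2), of "norm (G q) * (norm w)\<^sup>2"] by (simp add: mult.assoc)
  then show ?thesis using ch unfolding second_fundamental_form_ge_def by blast
qed

text \<open>Expand 0 \<le> norm (v - (1 + t) w)^2 and bound its last term by the hypothesis.\<close>
lemma inner_diff_ge_of_inner_ge:
  fixes v w :: "'a::real_inner"
  assumes "t \<ge> 0" and vw: "(1 + t) * (norm w)\<^sup>2 \<le> v \<bullet> w"
  shows "t / (1 + t) * (norm v)\<^sup>2 \<le> (v - w) \<bullet> v"
proof -
  have "0 \<le> (norm (v - (1 + t) *\<^sub>R w))\<^sup>2" by simp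
  also have "\<dots> = (norm v)\<^sup>2 - 2 * ((1 + t) * (v \<bullet> w)) + (1 + t) * ((1 + t) * (norm w)\<^sup>2)"
    by (simp add: power2_norm_eq_inner inner_diff_left inner_diff_right inner_commute algebra_simps)
  also have "\<dots> \<le> (norm v)\<^sup>2 - (1 + t) * (v \<bullet> w)"
    using mult_left_mono[OF vw, of "1 + t"] assms(1) by linarith
  finally have "(1 + t) * (v \<bullet> w) \<le> (norm v)\<^sup>2" by simp
  then have "v \<bullet> w \<le> (norm v)\<^sup>2 / (1 + t)" using assms(1) by (simp add: field_simps)
  moreover have "(v - w) \<bullet> v = (norm v)\<^sup>2 - v \<bullet> w"
    by (simp add: inner_diff_left power2_norm_eq_inner inner_commute[of w v])
  moreover have "(norm v)\<^sup>2 - (norm v)\<^sup>2 / (1 + t) = t / (1 + t) * (norm v)\<^sup>2"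
    using assms(1) by (simp add: field_simps)
  ultimately show ?thesis by linarith
qed

lemma closest_point_derivative_inner_ge:
  fixes K :: "'a::euclidean_space set"
  assumes K: "closed K" "convex K" "K \<noteq> {}" and x: "x \<notin> K" and "c \<ge> 0"
    and "second_fundamental_form_ge K c (closest_point K x)"
  shows "closest_point K differentiable (at x)"
    and "c * infdist x K / (1 + c * infdist x K) * (norm v)\<^sup>2
      \<le> (v - frechet_derivative (closest_point K) (at x) v) \<bullet> v"
proof -
  define p where "p = closest_point K x"
  obtain U g G H where ch: "local_C2_defining K p U g G H"
    and H: "\<And>w. G p \<bullet> w = 0 \<Longrightarrow> c * norm (G p) * (norm w)\<^sup>2 \<le> H p w \<bullet> w"
    using assms(6) unfolding second_fundamental_form_ge_def p_def by blast
  obtain P' where P': "(closest_point K has_derivative P') (at x)"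
    and inv: "\<And>v. \<exists>\<mu>. normal_map_deriv G H (p, infdist x K / norm (G p)) (P' v, \<mu>) = (v, 0)"
    using closest_point_has_derivative_local[OF K x ch[unfolded p_def]] unfolding p_def by blast
  then show "closest_point K differentiable (at x)" using differentiableI by blast
  define w where "w = P' v"
  obtain \<mu> where v: "w + (infdist x K / norm (G p)) *\<^sub>R H p w + \<mu> *\<^sub>R G p = v"
    and tangent: "G p \<bullet> w = 0"
    using inv[of v] by (auto simp: normal_map_deriv_def w_def)
  have Gp: "G p \<noteq> 0" using local_C2_definingD(2,6)[OF ch] by blast
  have "v \<bullet> w = w \<bullet> w + (infdist x K / norm (G p)) * (H p w \<bullet> w)"
    using tangent by (subst v[symmetric]) (simp add: inner_add_left)
  also have "\<dots> \<ge> w \<bullet> w + (infdist x K / norm (G p)) * (c * norm (G p) * (norm w)\<^sup>2)"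
    using H[OF tangent] by (intro add_left_mono mult_left_mono) (auto simp: infdist_nonneg)
  finally have "(1 + c * infdist x K) * (norm w)\<^sup>2 \<le> v \<bullet> w"
    using Gp by (simp add: power2_norm_eq_inner algebra_simps)
  from inner_diff_ge_of_inner_ge[OF _ this]
  show "c * infdist x K / (1 + c * infdist x K) * (norm v)\<^sup>2
      \<le> (v - frechet_derivative (closest_point K) (at x) v) \<bullet> v"
    using assms(5) frechet_derivative_at[OF P'] by (simp add: w_def infdist_nonneg)
qed

lemma hessian_comp_infdist_squared_ge:
  fixes K :: "'a::euclidean_space set"
  assumes K: "closed K" "convex K" "K \<noteq> {}" and x: "x \<notin> K"
    and "mono Phi" "C2_real Phi"
    and "c \<ge> 0" "second_fundamental_form_ge K c (closest_point K x)"
  shows "frechet_derivative (grad (\<lambda>y. Phi ((infdist y K)\<^sup>2))) (at x) v \<bullet> v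
    \<ge> 4 * deriv (deriv Phi) ((infdist x K)\<^sup>2) * ((x - closest_point K x) \<bullet> v)\<^sup>2
      + 2 * deriv Phi ((infdist x K)\<^sup>2) * (c * infdist x K / (1 + c * infdist x K)) * (norm v)\<^sup>2"
proof -
  note P = closest_point_derivative_inner_ge[OF K x assms(7,8)]
  have "0 \<le> 2 * deriv Phi ((infdist x K)\<^sup>2)"
    using mono_imp_has_real_derivative_nonneg[OF assms(5) C2_realD(1)[OF assms(6)]] by simp
  from mult_left_mono[OF P(2) this] show ?thesis
    unfolding hessian_comp_infdist_squared(2)[OF K C2_realD[OF assms(6)] P(1)] by (simp add: mult.assoc)
qed

lemma linear_inner_self_normalize:
  fixes A :: "'a::real_inner \<Rightarrow> 'a"
  assumes "linear A" and less: "A w \<bullet> w < c * (norm w)\<^sup>2"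
  shows "w \<noteq> 0" and "A (w /\<^sub>R norm w) \<bullet> (w /\<^sub>R norm w) < c"
proof -
  show "w \<noteq> 0" using less linear_0[OF assms(1)] by auto
  have "A (w /\<^sub>R norm w) \<bullet> (w /\<^sub>R norm w) = (A w \<bullet> w) / (norm w)\<^sup>2"
    by (simp add: linear_scale[OF assms(1)] power2_eq_square field_simps)
  also have "\<dots> < c" using less \<open>w \<noteq> 0\<close> by (simp add: divide_less_eq)
  finally show "A (w /\<^sub>R norm w) \<bullet> (w /\<^sub>R norm w) < c" .
qed

lemma local_C2_defining_tangential_limit:
  fixes K :: "'a::euclidean_space set"
  assumes ch: "local_C2_defining K p U g G H"
    and q: "qs \<longlonglongrightarrow> q" "q \<in> U" "\<And>n. qs n \<in> U"
    and u: "us \<longlonglongrightarrow> u" and tangent: "\<And>n. G (qs n) \<bullet> us n = 0"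
  shows "(\<lambda>n. G (qs n)) \<longlonglongrightarrow> G q" and "G q \<bullet> u = 0"
    and "(\<lambda>n. H (qs n) (us n) \<bullet> us n) \<longlonglongrightarrow> H q u \<bullet> u"
proof -
  note c = local_C2_definingD[OF ch]
  note H = local_C2_defining_bounded_linear_hessian[OF ch]
  show G: "(\<lambda>n. G (qs n)) \<longlonglongrightarrow> G q"
    using continuous_on_tendsto_compose[OF local_C2_defining_continuous(2)[OF ch] q(1,2)] q(3) by simp
  from tendsto_inner[OF G u] have "(\<lambda>n. 0) \<longlonglongrightarrow> G q \<bullet> u" by (simp add: tangent)
  then show "G q \<bullet> u = 0" by (simp add: LIMSEQ_const_iff)
  have "continuous_on U (\<lambda>y. Blinfun (H y))"
  proof (rule continuous_on_blinfun_componentwise)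
    fix i show "continuous_on U (\<lambda>y. blinfun_apply (Blinfun (H y)) i)"
      using c(5) by (rule continuous_on_eq) (simp add: bounded_linear_Blinfun_apply H)
  qed
  from continuous_on_tendsto_compose[OF this q(1,2)]
  have "(\<lambda>n. Blinfun (H (qs n))) \<longlonglongrightarrow> Blinfun (H q)" using q(3) by simp
  from blinfun.tendsto[OF this u]
  have "(\<lambda>n. H (qs n) (us n)) \<longlonglongrightarrow> H q u" using q(2,3) by (simp add: bounded_linear_Blinfun_apply H)
  then show "(\<lambda>n. H (qs n) (us n) \<bullet> us n) \<longlonglongrightarrow> H q u \<bullet> u" using u by (rule tendsto_inner)
qed

lemma local_C2_defining_tangential_hessian_limit_nonpos:
  fixes K :: "'a::euclidean_space set"
  assumes ch: "local_C2_defining K p U g G H"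
    and q: "qs \<longlonglongrightarrow> q" "q \<in> U" "\<And>n. qs n \<in> U"
    and us: "\<And>n. G (qs n) \<bullet> us n = 0" "\<And>n. norm (us n) = 1"
    and small: "\<And>n. H (qs n) (us n) \<bullet> us n \<le> \<epsilon> n * norm (G (qs n))" and "\<epsilon> \<longlonglongrightarrow> 0"
  shows "\<exists>l. norm l = 1 \<and> G q \<bullet> l = 0 \<and> H q l \<bullet> l \<le> 0"
proof -
  have "\<forall>n. us n \<in> sphere 0 1" using us(2) by simp
  then obtain l r where l: "l \<in> sphere 0 1" and r: "strict_mono r" and ul: "(us \<circ> r) \<longlonglongrightarrow> l"
    using seq_compactE[OF compact_imp_seq_compact[OF compact_sphere]] by blast
  have "(qs \<circ> r) \<longlonglongrightarrow> q" using LIMSEQ_subseq_LIMSEQ[OF q(1) r] .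
  note lim = local_C2_defining_tangential_limit[OF ch this q(2) _ ul, unfolded o_def, OF q(3) us(1)]
  have "(\<lambda>n. \<epsilon> (r n)) \<longlonglongrightarrow> 0" using LIMSEQ_subseq_LIMSEQ[OF assms(8) r] by (simp add: o_def)
  from tendsto_mult[OF tendsto_norm[OF lim(1)] this]
  have "(\<lambda>n. \<epsilon> (r n) * norm (G (qs (r n)))) \<longlonglongrightarrow> 0" by (simp add: mult.commute)
  from tendsto_le[OF trivial_limit_sequentially this lim(3)] have "H q l \<bullet> l \<le> 0"
    using small by (simp add: always_eventually)
  then show ?thesis using l lim(2) by auto
qed

lemma local_C2_defining_tangential_hessian_bound_near:
  fixes K :: "'a::euclidean_space set"
  assumes ch: "local_C2_defining K q U g G H"
    and pd: "\<forall>w. w \<noteq> 0 \<and> G q \<bullet> w = 0 \<longrightarrow> H q w \<bullet> w > 0"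
  shows "\<exists>e>0. \<exists>c>0. ball q e \<subseteq> U \<and>
    (\<forall>q'\<in>ball q e. \<forall>w. G q' \<bullet> w = 0 \<longrightarrow> c * norm (G q') * (norm w)\<^sup>2 \<le> H q' w \<bullet> w)"
proof (rule ccontr)
  note c = local_C2_definingD[OF ch]
  obtain e0 where e0: "e0 > 0" "ball q e0 \<subseteq> U" using c(1,2) open_contains_ball by blast
  assume neg: "\<not> ?thesis"
  have small_ball: "ball q (e0 / Suc n) \<subseteq> U" for n
    using e0 subset_ball[of "e0 / Suc n" e0 q] by (simp add: divide_le_eq)
  have "\<exists>q' u. q' \<in> ball q (e0 / Suc n) \<and> G q' \<bullet> u = 0 \<and> norm u = 1 \<and>
      H q' u \<bullet> u \<le> 1 / Suc n * norm (G q')" for n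
  proof -
    have "e0 / Suc n > 0" "1 / Suc n > (0::real)" using e0(1) by simp_all
    then obtain q' w where q': "q' \<in> ball q (e0 / Suc n)" and w: "G q' \<bullet> w = 0"
      and lt: "H q' w \<bullet> w < 1 / Suc n * norm (G q') * (norm w)\<^sup>2"
      using neg small_ball[of n] unfolding not_le[symmetric] by blast
    have "linear (H q')"
      using local_C2_defining_bounded_linear_hessian[OF ch] bounded_linear.linear q' small_ball by blast
    from linear_inner_self_normalize[OF this lt]
    show ?thesis using q' w by (intro exI[of _ q'] exI[of _ "w /\<^sub>R norm w"]) auto
  qed
  then obtain qs us where qs: "\<And>n. qs n \<in> ball q (e0 / Suc n)"
    and us: "\<And>n. G (qs n) \<bullet> us n = 0" "\<And>n. norm (us n) = 1"
    and small: "\<And>n. H (qs n) (us n) \<bullet> us n \<le> 1 / Suc n * norm (G (qs n))"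
    by metis
  have inv0: "(\<lambda>n. 1 / real (Suc n)) \<longlonglongrightarrow> 0"
    using LIMSEQ_Suc[OF lim_const_over_n[of 1]] by simp
  have "(\<lambda>n. qs n - q) \<longlonglongrightarrow> 0"
  proof (rule Lim_null_comparison)
    show "\<forall>\<^sub>F n in sequentially. norm (qs n - q) \<le> e0 * (1 / real (Suc n))"
      using qs by (auto simp: dist_norm norm_minus_commute less_imp_le)
  qed (use tendsto_mult_right_zero[OF inv0] in blast)
  then have "qs \<longlonglongrightarrow> q" by (simp add: LIM_zero_iff)
  moreover have "qs n \<in> U" for n using qs small_ball by blast
  ultimately obtain l where "norm l = 1" "G q \<bullet> l = 0" "H q l \<bullet> l \<le> 0"
    using local_C2_defining_tangential_hessian_limit_nonpos[OF ch _ c(2) _ us small inv0] by blast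
  then show False using pd[rule_format, of l] by force
qed

lemma pos_def_second_fundamental_form_uniform:
  fixes K :: "'a::euclidean_space set"
  assumes "compact (frontier K)" and "pos_def_second_fundamental_form K"
  obtains c where "c > 0" and "\<And>q. q \<in> frontier K \<Longrightarrow> second_fundamental_form_ge K c q"
proof -
  have "\<exists>e>0. \<exists>c>0. \<forall>q'\<in>ball q e. second_fundamental_form_ge K c q'" if "q \<in> frontier K" for q
  proof -
    have "\<exists>U g G H. local_C2_defining K q U g G H \<and> (\<forall>w. w \<noteq> 0 \<and> G q \<bullet> w = 0 \<longrightarrow> H q w \<bullet> w > 0)"
      using assms(2) that unfolding pos_def_second_fundamental_form_def by (rule bspec)
    then obtain U g G H where ch: "local_C2_defining K q U g G H"
      and pd: "\<forall>w. w \<noteq> 0 \<and> G q \<bullet> w = 0 \<longrightarrow> H q w \<bullet> w > 0"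
      by blast
    obtain e c where ec: "e > 0" "c > 0" "ball q e \<subseteq> U"
      and bound: "\<And>q' w. q' \<in> ball q e \<Longrightarrow> G q' \<bullet> w = 0 \<Longrightarrow> c * norm (G q') * (norm w)\<^sup>2 \<le> H q' w \<bullet> w"
      using local_C2_defining_tangential_hessian_bound_near[OF ch pd] by blast
    have "second_fundamental_form_ge K c q'" if "q' \<in> ball q e" for q'
      unfolding second_fundamental_form_ge_def
      using local_C2_defining_shift[OF ch, of q'] bound[OF that] that ec(3) by blast
    then show ?thesis using ec(1,2) by blast
  qed
  then obtain E C where E: "\<And>q. q \<in> frontier K \<Longrightarrow> E q > 0"
    and C: "\<And>q. q \<in> frontier K \<Longrightarrow> C q > 0"
    and EC: "\<And>q q'. q \<in> frontier K \<Longrightarrow> q' \<in> ball q (E q) \<Longrightarrow> second_fundamental_form_ge K (C q) q'"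
    by metis
  have "frontier K \<subseteq> (\<Union>q\<in>frontier K. ball q (E q))" using E by (auto intro!: bexI)
  then obtain D where D: "D \<subseteq> frontier K" "finite D" "frontier K \<subseteq> (\<Union>q\<in>D. ball q (E q))"
    using compactE_image[OF assms(1), of "frontier K" "\<lambda>q. ball q (E q)"] by blast
  define c where "c = Min (insert 1 (C ` D))"
  show ?thesis
  proof
    show "c > 0" using D(1,2) C by (auto simp: c_def)
    fix q' assume "q' \<in> frontier K"
    then obtain q where q: "q \<in> D" "q' \<in> ball q (E q)" using D(3) by blast
    moreover have "c \<le> C q" using q(1) D(2) by (simp add: c_def)
    ultimately show "second_fundamental_form_ge K c q'"
      using EC[of q q'] D(1) second_fundamental_form_ge_mono by blast
  qed
qed

theorem corollary2p3:
  fixes K :: "'a::euclidean_space set" and Phi :: "real \<Rightarrow> real" and Psi :: "'a \<Rightarrow> real"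
    and rK RK :: real
  assumes "closed K" and "convex K"
    and "rK > 0" and "RK > 0"
    and "ball 0 rK \<subseteq> K" and "K \<subseteq> ball 0 RK"
    and "mono Phi"
    and Psi_def: "\<And>x. Psi x = Phi ((infdist x K)\<^sup>2)"
  shows
    "(Phi C1_differentiable_on UNIV \<longrightarrow>
       (\<forall>x. (Psi has_derivative
               (\<lambda>h. (2 * deriv Phi ((infdist x K)\<^sup>2)) *\<^sub>R (x - closest_point K x) \<bullet> h)) (at x)
          \<and> grad Psi x \<bullet> x \<ge> 2 * deriv Phi ((infdist x K)\<^sup>2) * (infdist x K)\<^sup>2
          \<and> grad Psi x \<bullet> x \<ge> 2 * deriv Phi ((infdist x K)\<^sup>2) * rK * infdist x K))
   \<and> (C2_boundary K \<and> C2_real Phi \<longrightarrow>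
       (\<forall>x v. x \<notin> K \<longrightarrow>
          grad Psi differentiable (at x) \<and> closest_point K differentiable (at x) \<and>
          frechet_derivative (grad Psi) (at x) v \<bullet> v
            = 4 * deriv (deriv Phi) ((infdist x K)\<^sup>2) * ((x - closest_point K x) \<bullet> v)\<^sup>2
              + 2 * deriv Phi ((infdist x K)\<^sup>2)
                  * ((v - frechet_derivative (closest_point K) (at x) v) \<bullet> v)))
   \<and> (C2_boundary K \<and> C2_real Phi \<and> pos_def_second_fundamental_form K \<longrightarrow>
       (\<exists>CK > 0. \<forall>x v. x \<notin> K \<longrightarrow>
          frechet_derivative (grad Psi) (at x) v \<bullet> v
            \<ge> 4 * deriv (deriv Phi) ((infdist x K)\<^sup>2) * ((x - closest_point K x) \<bullet> v)\<^sup>2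
              + 2 * deriv Phi ((infdist x K)\<^sup>2)
                  * (CK * infdist x K / (1 + CK * infdist x K)) * (norm v)\<^sup>2))"
proof -
  have r: "cball 0 rK \<subseteq> K"
    using closure_minimal[OF assms(5,1)] unfolding closure_ball[OF assms(3)] .
  then have K: "closed K" "convex K" "K \<noteq> {}" using assms(1-3) by auto
  have Psi: "Psi = (\<lambda>x. Phi ((infdist x K)\<^sup>2))" using Psi_def by blast
  have C1: "(Phi has_real_derivative deriv Phi t) (at t)" if "Phi C1_differentiable_on UNIV" for t
    using that unfolding C1_differentiable_on_eq by (simp add: DERIV_deriv_iff_real_differentiable)
  have "compact (frontier K)"
    using assms(6) by (meson bounded_ball bounded_subset compact_frontier_bounded)
  then have "\<exists>c>0. \<forall>q\<in>frontier K. second_fundamental_form_ge K c q"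
    if "pos_def_second_fundamental_form K"
    using pos_def_second_fundamental_form_uniform that by metis
  then show ?thesis
    unfolding Psi
  proof (intro conjI impI allI)
    fix x assume "Phi C1_differentiable_on UNIV"
    note C1 = C1[OF this]
    show "((\<lambda>x. Phi ((infdist x K)\<^sup>2)) has_derivative
      (\<lambda>h. (2 * deriv Phi ((infdist x K)\<^sup>2)) *\<^sub>R (x - closest_point K x) \<bullet> h)) (at x)"
      by (rule has_derivative_comp_infdist_squared[OF K C1])
    show "grad (\<lambda>x. Phi ((infdist x K)\<^sup>2)) x \<bullet> x \<ge> 2 * deriv Phi ((infdist x K)\<^sup>2) * (infdist x K)\<^sup>2"
      and "grad (\<lambda>x. Phi ((infdist x K)\<^sup>2)) x \<bullet> x \<ge> 2 * deriv Phi ((infdist x K)\<^sup>2) * rK * infdist x K"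
      using grad_comp_infdist_squared_inner_ge[OF K(1,2) _ r assms(7) C1] assms(3) by simp_all
  qed (use closest_point_differentiable_C2_boundary[OF K] closest_point_in_frontier[OF K(1,3)]
      hessian_comp_infdist_squared[OF K C2_realD(1) C2_realD(2)]
      hessian_comp_infdist_squared_ge[OF K _ assms(7)] in \<open>blast intro: less_imp_le\<close>)+
qed

end
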